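(* Let $A\in\mathbb{R}^{n\times n}$ be such that, for every $j\in\{1,\dots,q\}$, $\Lambda_j$ is real or $\Lambda_j$ is complex. Let $y_0\in\mathbb{R}^n$ and unit $\hat z_0\in\mathbb{R}^n$ with $w^{(1)}y_0\ne0$ and $w^{(1)}\hat z_0\neq0$. Then, for every $t$ with $\epsilon(t,\hat y_0)<1$, $$K(t,y_0,\hat z_0)\approx K_\infty(t,y_0,\hat z_0)\ \text{with precision}\ \frac{\epsilon(t,\hat z_0)+\epsilon(t,\hat y_0)}{1-\epsilon(t,\hat y_0)},\qquad K(t,y_0)\approx K_\infty(t,y_0)\ \text{with precision}\ \frac{\epsilon(t)+\epsilon(t,\hat y_0)}{1-\epsilon(t,\hat y_0)},$$ where for $u\in\{\hat y_0,\hat z_0\}$ $$\epsilon(t,u)=\sum_{j=2}^q e^{(r_j-r_1)t}\frac{f_j}{f_1}\cdot\frac{|\hat w^{(j)}u|}{|\hat w^{(1)}u|}G_j(t,u),\qquad \epsilon(t)=\sum_{j=2}^q e^{(r_j-r_1)t}\frac{f_j}{f_1}G_j(t),$$ and $G_j$ is given by: (1) if $\Lambda_j,\Lambda_1$ both real, $G_j(t,u)=G_j(t)=1$; (2) if $\Lambda_j$ complex, $\Lambda_1$ real, $G_j(t,u)=2\|\hat\Theta_j(t,u)\|$, $G_j(t)=2\|\hat\Theta_j(t)\|$; (3) if $\Lambda_j$ real, $\Lambda_1$ complex, $G_j(t,u)=1/(2\|\hat\Theta_1(t,u)\|)$, $G_j(t)=1/(2\|\hat\Theta_1(t)\|)$;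 (4) if both complex, $G_j(t,u)=\|\hat\Theta_j(t,u)\|/\|\hat\Theta_1(t,u)\|$, $G_j(t)=\|\hat\Theta_j(t)\|/\|\hat\Theta_1(t)\|$.
   Context: $\|\cdot\|$ is a vector norm on $\mathbb{C}^n$, used on $\mathbb{R}^n$ by restriction; real matrices have the norm induced over real vectors; for a row $w$, $\|w\|=\max_{\|u\|=1}|wu|$ (over $\mathbb{R}^n$ for real $w$, over $\mathbb{C}^n$ for complex $w$). $\hat y_0=y_0/\|y_0\|$, $K(t,y_0,\hat z_0)=\|e^{tA}\hat z_0\|/\|e^{tA}\hat y_0\|$, $K(t,y_0)=\|e^{tA}\|/\|e^{tA}\hat y_0\|$. Let $r_1>r_2>\dots>r_q$ be the distinct real parts of the eigenvalues of $A$ and $\Lambda_j$ the set of eigenvalues with real part $r_j$. $\Lambda_j$ is real if it consists of one real simple eigenvalue $\lambda_j$; $\Lambda_j$ is complex if it consists exactly of a pair of simple complex conjugate eigenvalues $\lambda_j,\overline{\lambda_j}$ with $\omega_j=\operatorname{Im}\lambda_j>0$. In either case $w^{(j)}$ (row) and $v^{(j)}$ (column) are left and right eigenvectors for $\lambda_j$ (real in the real case), $\hat w^{(j)}=w^{(j)}/\|w^{(j)}\|$, $\hat v^{(j)}=v^{(j)}/\|v^{(j)}\|$, and $f_j=\|w^{(j)}\|\,\|v^{(j)}\|$. For complex $\Lambda_j$: polar forms $\hat v^{(j)}_k=|\hat v^{(j)}_k|e^{\sqrt{-1}\alpha_{jk}}$, $\hat w^{(j)}_l=|\hat w^{(j)}_l|e^{\sqrt{-1}\beta_{jl}}$,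 $\hat w^{(j)}u=|\hat w^{(j)}u|e^{\sqrt{-1}\gamma_j(u)}$ ($u\in\mathbb{R}^n$), $\hat\Theta_j(t,u)=(|\hat v^{(j)}_k|\cos(\omega_jt+\alpha_{jk}+\gamma_j(u)))_{k=1}^n$, $\hat\Theta_j(t)=(|\hat v^{(j)}_k||\hat w^{(j)}_l|\cos(\omega_jt+\alpha_{jk}+\beta_{jl}))_{k,l=1}^n$. Asymptotic condition numbers: if $\Lambda_1$ is real, $K_\infty(t,y_0,\hat z_0)=|\hat w^{(1)}\hat z_0|/|\hat w^{(1)}\hat y_0|$ and $K_\infty(t,y_0)=1/|\hat w^{(1)}\hat y_0|$; if $\Lambda_1$ is complex, $K_\infty(t,y_0,\hat z_0)=\frac{|\hat w^{(1)}\hat z_0|}{|\hat w^{(1)}\hat y_0|}\cdot\frac{\|\hat\Theta_1(t,\hat z_0)\|}{\|\hat\Theta_1(t,\hat y_0)\|}$ and $K_\infty(t,y_0)=\frac{1}{|\hat w^{(1)}\hat y_0|}\cdot\frac{\|\hat\Theta_1(t)\|}{\|\hat\Theta_1(t,\hat y_0)\|}$. For $a,b\in\mathbb{R}$, $\epsilon\ge0$: "$a\approx b$ with precision $\epsilon$" means $a=b(1+\chi)$ with $|\chi|\le\epsilon$. *)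

theory Defs
  imports "HOL-Analysis.Analysis" "HOL-Computational_Algebra.Polynomial"
begin

definition cvec :: "real^'n \<Rightarrow> complex^'n" where
  "cvec x = (\<chi> i. complex_of_real (x $ i))"

definition cmat :: "real^'n^'m \<Rightarrow> complex^'n^'m" where
  "cmat M = (\<chi> i j. complex_of_real (M $ i $ j))"

definition is_real_vec :: "complex^'n \<Rightarrow> bool" where
  "is_real_vec x \<longleftrightarrow> (\<forall>i. Im (x $ i) = 0)"

definition is_cnorm :: "(complex^'n \<Rightarrow> real) \<Rightarrow> bool" where
  "is_cnorm N \<longleftrightarrow>
     (\<forall>x. 0 \<le> N x) \<and> (\<forall>x. N x = 0 \<longleftrightarrow> x = 0) \<and>
     (\<forall>c x. N (c *s x) = cmod c * N x) \<and> (\<forall>x y. N (x + y) \<le> N x + N y)"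

definition rnorm :: "(complex^'n \<Rightarrow> real) \<Rightarrow> real^'n \<Rightarrow> real" where
  "rnorm N x = N (cvec x)"

definition mat_opnorm :: "(complex^'n \<Rightarrow> real) \<Rightarrow> real^'n^'n \<Rightarrow> real" where
  "mat_opnorm N M = Sup {rnorm N (M *v u) | u. rnorm N u = 1}"

definition rowapp :: "complex^'n \<Rightarrow> real^'n \<Rightarrow> complex" where
  "rowapp w u = (\<Sum>i\<in>UNIV. w $ i * complex_of_real (u $ i))"

definition row_norm :: "(complex^'n \<Rightarrow> real) \<Rightarrow> complex^'n \<Rightarrow> real" where
  "row_norm N w =
     (if is_real_vec w then Sup {cmod (rowapp w u) | u. rnorm N u = 1}
      else Sup {cmod (\<Sum>i\<in>UNIV. w $ i * u $ i) | u. N u = 1})"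

definition normalize_vec :: "(complex^'n \<Rightarrow> real) \<Rightarrow> complex^'n \<Rightarrow> complex^'n" where
  "normalize_vec N x = complex_of_real (1 / N x) *s x"

definition normalize_row :: "(complex^'n \<Rightarrow> real) \<Rightarrow> complex^'n \<Rightarrow> complex^'n" where
  "normalize_row N x = complex_of_real (1 / row_norm N x) *s x"

definition eigenvalues :: "real^'n^'n \<Rightarrow> complex set" where
  "eigenvalues A = {\<mu>. \<exists>x. x \<noteq> 0 \<and> cmat A *v x = \<mu> *s x}"

definition charpoly :: "real^'n^'n \<Rightarrow> complex poly" where
  "charpoly A = det (\<chi> i j. (if i = j then [:0, 1:] else 0) - [: cmat A $ i $ j :])"

definition simple_eig :: "real^'n^'n \<Rightarrow> complex \<Rightarrow> bool" where
  "simple_eig A \<mu> \<longleftrightarrow> \<mu> \<in> eigenvalues A \<and> order \<mu> (charpoly A) = 1"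

text \<open>The class of eigenvalues with real part rho is "real" (one simple real eigenvalue mu)
  or "complex" (exactly the simple pair mu, conj mu with Im mu > 0).\<close>
definition eig_class :: "real^'n^'n \<Rightarrow> real \<Rightarrow> complex \<Rightarrow> bool" where
  "eig_class A \<rho> \<mu> \<longleftrightarrow>
     (let L = {\<nu> \<in> eigenvalues A. Re \<nu> = \<rho>} in
       (L = {\<mu>} \<and> Im \<mu> = 0 \<and> simple_eig A \<mu>) \<or>
       (L = {\<mu>, cnj \<mu>} \<and> Im \<mu> > 0 \<and> simple_eig A \<mu> \<and> simple_eig A (cnj \<mu>)))"

fun matpow :: "real^'n^'n \<Rightarrow> nat \<Rightarrow> real^'n^'n" where
  "matpow M 0 = mat 1"
| "matpow M (Suc k) = M ** matpow M k"

definition mexp :: "real \<Rightarrow> real^'n^'n \<Rightarrow> real^'n^'n" where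
  "mexp t M = (\<chi> i j. (\<Sum>k. (t ^ k / fact k) * (matpow M k $ i $ j)))"

definition Theta_u :: "real \<Rightarrow> complex^'n \<Rightarrow> complex^'n \<Rightarrow> real \<Rightarrow> real^'n \<Rightarrow> real^'n" where
  "Theta_u \<omega> vh wh t u =
     (\<chi> k. cmod (vh $ k) * cos (\<omega> * t + Arg (vh $ k) + Arg (rowapp wh u)))"

definition Theta_m :: "real \<Rightarrow> complex^'n \<Rightarrow> complex^'n \<Rightarrow> real \<Rightarrow> real^'n^'n" where
  "Theta_m \<omega> vh wh t =
     (\<chi> k l. cmod (vh $ k) * cmod (wh $ l) * cos (\<omega> * t + Arg (vh $ k) + Arg (wh $ l)))"

definition fcond :: "(complex^'n \<Rightarrow> real) \<Rightarrow> (nat \<Rightarrow> complex^'n) \<Rightarrow> (nat \<Rightarrow> complex^'n) \<Rightarrow> nat \<Rightarrow> real" where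
  "fcond N w v j = row_norm N (w j) * N (v j)"

definition Thu :: "(complex^'n \<Rightarrow> real) \<Rightarrow> (nat \<Rightarrow> complex) \<Rightarrow> (nat \<Rightarrow> complex^'n) \<Rightarrow> (nat \<Rightarrow> complex^'n)
    \<Rightarrow> nat \<Rightarrow> real \<Rightarrow> real^'n \<Rightarrow> real^'n" where
  "Thu N lam w v j t u = Theta_u (Im (lam j)) (normalize_vec N (v j)) (normalize_row N (w j)) t u"

definition Thm :: "(complex^'n \<Rightarrow> real) \<Rightarrow> (nat \<Rightarrow> complex) \<Rightarrow> (nat \<Rightarrow> complex^'n) \<Rightarrow> (nat \<Rightarrow> complex^'n)
    \<Rightarrow> nat \<Rightarrow> real \<Rightarrow> real^'n^'n" where
  "Thm N lam w v j t = Theta_m (Im (lam j)) (normalize_vec N (v j)) (normalize_row N (w j)) t"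

text \<open>G_j(t,u); the class of Lambda_j is real iff Im (lam j) = 0.\<close>
definition Gu :: "(complex^'n \<Rightarrow> real) \<Rightarrow> (nat \<Rightarrow> complex) \<Rightarrow> (nat \<Rightarrow> complex^'n) \<Rightarrow> (nat \<Rightarrow> complex^'n)
    \<Rightarrow> nat \<Rightarrow> real \<Rightarrow> real^'n \<Rightarrow> real" where
  "Gu N lam w v j t u =
     (if Im (lam j) = 0 \<and> Im (lam 1) = 0 then 1
      else if Im (lam 1) = 0 then 2 * rnorm N (Thu N lam w v j t u)
      else if Im (lam j) = 0 then 1 / (2 * rnorm N (Thu N lam w v 1 t u))
      else rnorm N (Thu N lam w v j t u) / rnorm N (Thu N lam w v 1 t u))"

definition Gm :: "(complex^'n \<Rightarrow> real) \<Rightarrow> (nat \<Rightarrow> complex) \<Rightarrow> (nat \<Rightarrow> complex^'n) \<Rightarrow> (nat \<Rightarrow> complex^'n)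
    \<Rightarrow> nat \<Rightarrow> real \<Rightarrow> real" where
  "Gm N lam w v j t =
     (if Im (lam j) = 0 \<and> Im (lam 1) = 0 then 1
      else if Im (lam 1) = 0 then 2 * mat_opnorm N (Thm N lam w v j t)
      else if Im (lam j) = 0 then 1 / (2 * mat_opnorm N (Thm N lam w v 1 t))
      else mat_opnorm N (Thm N lam w v j t) / mat_opnorm N (Thm N lam w v 1 t))"

definition eps_u :: "(complex^'n \<Rightarrow> real) \<Rightarrow> nat \<Rightarrow> (nat \<Rightarrow> real) \<Rightarrow> (nat \<Rightarrow> complex)
    \<Rightarrow> (nat \<Rightarrow> complex^'n) \<Rightarrow> (nat \<Rightarrow> complex^'n) \<Rightarrow> real \<Rightarrow> real^'n \<Rightarrow> real" where
  "eps_u N q r lam w v t u =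
     (\<Sum>j = 2..q. exp ((r j - r 1) * t) * (fcond N w v j / fcond N w v 1)
        * (cmod (rowapp (normalize_row N (w j)) u) / cmod (rowapp (normalize_row N (w 1)) u))
        * Gu N lam w v j t u)"

definition eps_m :: "(complex^'n \<Rightarrow> real) \<Rightarrow> nat \<Rightarrow> (nat \<Rightarrow> real) \<Rightarrow> (nat \<Rightarrow> complex)
    \<Rightarrow> (nat \<Rightarrow> complex^'n) \<Rightarrow> (nat \<Rightarrow> complex^'n) \<Rightarrow> real \<Rightarrow> real" where
  "eps_m N q r lam w v t =
     (\<Sum>j = 2..q. exp ((r j - r 1) * t) * (fcond N w v j / fcond N w v 1) * Gm N lam w v j t)"

definition Kz :: "(complex^'n \<Rightarrow> real) \<Rightarrow> real^'n^'n \<Rightarrow> real \<Rightarrow> real^'n \<Rightarrow> real^'n \<Rightarrow> real" where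
  "Kz N A t yh zh = rnorm N (mexp t A *v zh) / rnorm N (mexp t A *v yh)"

definition Km :: "(complex^'n \<Rightarrow> real) \<Rightarrow> real^'n^'n \<Rightarrow> real \<Rightarrow> real^'n \<Rightarrow> real" where
  "Km N A t yh = mat_opnorm N (mexp t A) / rnorm N (mexp t A *v yh)"

definition Kinf_z :: "(complex^'n \<Rightarrow> real) \<Rightarrow> (nat \<Rightarrow> complex) \<Rightarrow> (nat \<Rightarrow> complex^'n) \<Rightarrow> (nat \<Rightarrow> complex^'n)
    \<Rightarrow> real \<Rightarrow> real^'n \<Rightarrow> real^'n \<Rightarrow> real" where
  "Kinf_z N lam w v t yh zh =
     (if Im (lam 1) = 0
      then cmod (rowapp (normalize_row N (w 1)) zh) / cmod (rowapp (normalize_row N (w 1)) yh)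
      else cmod (rowapp (normalize_row N (w 1)) zh) / cmod (rowapp (normalize_row N (w 1)) yh)
           * (rnorm N (Thu N lam w v 1 t zh) / rnorm N (Thu N lam w v 1 t yh)))"

definition Kinf_m :: "(complex^'n \<Rightarrow> real) \<Rightarrow> (nat \<Rightarrow> complex) \<Rightarrow> (nat \<Rightarrow> complex^'n) \<Rightarrow> (nat \<Rightarrow> complex^'n)
    \<Rightarrow> real \<Rightarrow> real^'n \<Rightarrow> real" where
  "Kinf_m N lam w v t yh =
     (if Im (lam 1) = 0
      then 1 / cmod (rowapp (normalize_row N (w 1)) yh)
      else 1 / cmod (rowapp (normalize_row N (w 1)) yh)
           * (mat_opnorm N (Thm N lam w v 1 t) / rnorm N (Thu N lam w v 1 t yh)))"

definition approx_prec :: "real \<Rightarrow> real \<Rightarrow> real \<Rightarrow> bool" where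
  "approx_prec a b e \<longleftrightarrow> (\<exists>c. \<bar>c\<bar> \<le> e \<and> a = b * (1 + c))"

end

(*
  All eigenvalues of A are simple and the classes Lambda_j exhaust the spectrum, so A has n
  distinct eigenvalues, and the left and right eigenvectors, normalised by w v = 1, form dual
  bases of C^n.  Expanding in these bases gives e^(tA) = D_1(t) + ... + D_q(t), where D_j(t) is
  the real matrix e^(t lambda_j) v_j w_j, plus its complex conjugate when Lambda_j is complex.
  In polar form D_j(t) = e^(r_j t) f_j hat(v_j) hat(w_j) for a real class and
  D_j(t) = 2 e^(r_j t) f_j hat(Theta_j)(t) for a complex one.  Hence ||D_j(t) u|| and ||D_j(t)||
  are e^(r_j t) f_j |hat(w_j) u| g_j(t,u) and e^(r_j t) f_j g_j(t), where g_j is 1 for a real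
  class and 2 ||hat(Theta_j)|| for a complex one, and G_j = g_j / g_1.  By the triangle
  inequality, ||e^(tA) u|| and ||e^(tA)|| agree with the norms of their leading terms D_1(t) u
  and D_1(t) up to the relative errors eps(t,u) and eps(t); both condition numbers are quotients
  of such norms, and the precision of a quotient gives the claim.
*)

theory Submission
  imports Defs "HOL-Computational_Algebra.Fundamental_Theorem_Algebra"
begin

section \<open>The characteristic polynomial\<close>

lemma poly_det:
  fixes M :: "'a::comm_ring_1 poly^'n^'n"
  shows "poly (det M) z = det (\<chi> i j. poly (M $ i $ j) z)"
  unfolding det_def by (simp add: poly_sum poly_prod)

lemma poly_charpoly: "poly (charpoly A) z = det (mat z - cmat A)"
  unfolding charpoly_def poly_det by (intro arg_cong[where f=det]) (simp add: vec_eq_iff mat_def)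

lemma mat_mult_vec: "mat c *v x = c *s x"
  by (simp add: vec_eq_iff matrix_vector_mult_def mat_def if_distrib[where f="\<lambda>a. a * _"] cong: if_cong)

lemma poly_charpoly_eq_0_iff: "poly (charpoly A) z = 0 \<longleftrightarrow> z \<in> eigenvalues A"
proof -
  have "poly (charpoly A) z = 0 \<longleftrightarrow> \<not> invertible (mat z - cmat A)"
    by (simp add: poly_charpoly invertible_det_nz)
  also have "\<dots> \<longleftrightarrow> (\<exists>x. (mat z - cmat A) *v x = 0 \<and> x \<noteq> 0)"
    using invertible_left_inverse matrix_left_invertible_ker by blast
  also have "\<dots> \<longleftrightarrow> z \<in> eigenvalues A"
    by (simp add: eigenvalues_def matrix_vector_mult_diff_rdistrib mat_mult_vec
        eq_commute[of "_ *s _"] conj_commute)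
  finally show ?thesis .
qed

lemma degree_charpoly:
  fixes A :: "real^'n^'n"
  shows "degree (charpoly A) = CARD('n)"
proof -
  define M :: "complex poly^'n^'n"
    where "M = (\<chi> i j. (if i = j then [:0, 1:] else 0) - [: cmat A $ i $ j :])"
  define P where "P = {p. p permutes (UNIV::'n set)}"
  define T where "T p = of_int (sign p) * (\<Prod>i\<in>UNIV. M $ i $ p i)" for p
  have fin: "finite P" and id: "id \<in> P"
    by (simp_all add: P_def finite_permutations)
  have charpoly: "charpoly A = T id + (\<Sum>p\<in>P - {id}. T p)"
    unfolding charpoly_def det_def M_def[symmetric] T_def[symmetric] P_def[symmetric]
    using fin id by (simp add: sum.remove)
  have diag: "M $ i $ i = [:- cmat A $ i $ i, 1:]" for i
    by (simp add: M_def)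
  have offdiag: "i \<noteq> j \<Longrightarrow> degree (M $ i $ j) = 0" for i j
    by (simp add: M_def)
  have deg_le_1: "degree (M $ i $ j) \<le> 1" for i j
    by (cases "i = j") (simp_all add: diag offdiag)
  have deg_id: "degree (T id) = CARD('n)"
    by (simp add: T_def diag degree_prod_sum_eq)
  have deg_other: "degree (T p) \<le> CARD('n) - 1" if "p \<in> P - {id}" for p
  proof -
    from that obtain i0 where i0: "p i0 \<noteq> i0" by (auto simp: fun_eq_iff)
    have "degree (T p) \<le> degree (\<Prod>i\<in>UNIV. M $ i $ p i)"
      unfolding T_def using degree_mult_le[of "of_int (sign p)" "\<Prod>i\<in>UNIV. M $ i $ p i"]
      by simp
    also have "\<dots> \<le> (\<Sum>i\<in>UNIV. degree (M $ i $ p i))"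
      using degree_prod_sum_le[of UNIV "\<lambda>i. M $ i $ p i"] by (simp add: o_def)
    also have "\<dots> \<le> (\<Sum>i\<in>UNIV. if i = i0 then 0 else 1)"
      by (intro sum_mono) (use i0 offdiag deg_le_1 in auto)
    also have "\<dots> = CARD('n) - 1"
      by (simp add: sum.If_cases Compl_eq_Diff_UNIV card_Diff_singleton)
    finally show ?thesis .
  qed
  have "degree (\<Sum>p\<in>P - {id}. T p) < degree (T id)"
    unfolding deg_id by (rule le_less_trans[OF degree_sum_le]) (use fin deg_other in auto)
  then show ?thesis
    by (simp add: charpoly degree_add_eq_left deg_id)
qed

lemma card_eigenvalues_if_simple:
  fixes A :: "real^'n^'n"
  assumes "\<forall>\<mu>\<in>eigenvalues A. order \<mu> (charpoly A) = 1"
  shows "finite (eigenvalues A)" "card (eigenvalues A) = CARD('n)"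
proof -
  let ?p = "charpoly A"
  have "?p \<noteq> 0"
    using degree_charpoly[of A] by (metis degree_0 zero_less_card_finite less_irrefl)
  have roots: "{z. poly ?p z = 0} = eigenvalues A"
    using poly_charpoly_eq_0_iff by blast
  show "finite (eigenvalues A)"
    using poly_roots_finite[OF \<open>?p \<noteq> 0\<close>] roots by simp
  have "?p = smult (lead_coeff ?p) (\<Prod>z|poly ?p z = 0. [:-z, 1:] ^ order z ?p)"
    by (rule complex_poly_decompose[symmetric])
  also have "\<dots> = smult (lead_coeff ?p) (\<Prod>z\<in>eigenvalues A. [:-z, 1:])"
    unfolding roots using assms by (intro arg_cong[where f="smult _"] prod.cong) auto
  finally have "degree ?p = degree (smult (lead_coeff ?p) (\<Prod>z\<in>eigenvalues A. [:-z, 1:]))"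
    by (rule arg_cong)
  then have "degree ?p = card (eigenvalues A)"
    using \<open>?p \<noteq> 0\<close> by (simp add: degree_prod_sum_eq)
  then show "card (eigenvalues A) = CARD('n)"
    using degree_charpoly[of A] by simp
qed

lemma cmat_mult: "cmat (A ** B) = cmat A ** cmat B"
  by (simp add: cmat_def vec_eq_iff matrix_matrix_mult_def)

lemma cmat_mat: "cmat (mat c) = mat (of_real c)"
  by (simp add: cmat_def mat_def vec_eq_iff)

lemma cmat_matpow_mult_eigenvector:
  assumes "cmat A *v x = \<mu> *s x"
  shows "cmat (matpow A k) *v x = \<mu> ^ k *s x"
  by (induction k)
    (simp_all add: cmat_mat cmat_mult matrix_vector_mul_assoc[symmetric] vector_scalar_commute assms)

lemma abs_matpow_entry_le:
  fixes A :: "real^'n^'n"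
  shows "\<bar>matpow A k $ i $ j\<bar> \<le> (\<Sum>i\<in>UNIV. \<Sum>j\<in>UNIV. \<bar>A $ i $ j\<bar>) ^ k"
proof (induction k arbitrary: i j)
  case 0
  then show ?case by (simp add: mat_def)
next
  case (Suc k)
  define S where "S = (\<Sum>i\<in>UNIV. \<Sum>j\<in>UNIV. \<bar>A $ i $ j\<bar>)"
  have "\<bar>matpow A (Suc k) $ i $ j\<bar> \<le> (\<Sum>l\<in>UNIV. \<bar>A $ i $ l\<bar> * S ^ k)"
    unfolding S_def using Suc.IH
    by (auto simp: matrix_matrix_mult_def abs_mult intro!: order_trans[OF sum_abs] sum_mono mult_left_mono)
  also have "\<dots> \<le> S * S ^ k"
    unfolding sum_distrib_right[symmetric] S_def
    by (intro mult_right_mono member_le_sum) (auto intro: sum_nonneg zero_le_power)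
  finally show ?case by (simp add: S_def)
qed

lemma summable_mexp_entry:
  fixes A :: "real^'n^'n"
  shows "summable (\<lambda>k. t ^ k / fact k * matpow A k $ i $ j)"
proof -
  define S where "S = (\<Sum>i\<in>UNIV. \<Sum>j\<in>UNIV. \<bar>A $ i $ j\<bar>)"
  show ?thesis
  proof (rule summable_comparison_test'[OF summable_exp[of "\<bar>t\<bar> * S"]])
    fix k :: nat
    show "norm (t ^ k / fact k * matpow A k $ i $ j) \<le> inverse (fact k) * (\<bar>t\<bar> * S) ^ k"
      using abs_matpow_entry_le[of A k i j]
      by (simp add: S_def abs_mult power_abs power_mult_distrib divide_inverse mult_ac mult_left_mono)
  qed
qed

lemma cmat_mexp_mult_eigenvector:
  fixes A :: "real^'n^'n"
  assumes "cmat A *v x = \<mu> *s x"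
  shows "cmat (mexp t A) *v x = exp (of_real t * \<mu>) *s x"
proof -
  have "(cmat (mexp t A) *v x) $ i = exp (of_real t * \<mu>) * x $ i" for i
  proof -
    define c :: "nat \<Rightarrow> complex" where "c k = of_real (t ^ k / fact k)" for k
    have entry: "(\<lambda>k. c k * cmat (matpow A k) $ i $ j) sums cmat (mexp t A) $ i $ j" for j
    proof -
      have "(\<lambda>k. t ^ k / fact k * matpow A k $ i $ j) sums mexp t A $ i $ j"
        unfolding mexp_def using summable_mexp_entry[of t A i j] by (simp add: summable_sums)
      then have "(\<lambda>k. complex_of_real (t ^ k / fact k * matpow A k $ i $ j))
          sums complex_of_real (mexp t A $ i $ j)"
        by (rule sums_of_real)
      then show ?thesis by (simp add: c_def cmat_def)
    qed
    have "(\<lambda>k. \<Sum>j\<in>UNIV. c k * cmat (matpow A k) $ i $ j * x $ j)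
        sums (\<Sum>j\<in>UNIV. cmat (mexp t A) $ i $ j * x $ j)"
      by (intro sums_sum sums_mult2 entry)
    then have "(\<lambda>k. c k * (cmat (matpow A k) *v x) $ i) sums (cmat (mexp t A) *v x) $ i"
      by (simp add: matrix_vector_mult_def sum_distrib_left mult.assoc)
    moreover have "(\<lambda>k. (of_real t * \<mu>) ^ k /\<^sub>R fact k * x $ i)
        sums (exp (of_real t * \<mu>) * x $ i)"
      by (intro sums_mult2 exp_converges)
    moreover have "(of_real t * \<mu>) ^ k /\<^sub>R fact k * x $ i = c k * (cmat (matpow A k) *v x) $ i" for k
      by (simp add: cmat_matpow_mult_eigenvector[OF assms] c_def power_mult_distrib
          scaleR_conv_of_real field_simps)
    ultimately show ?thesis by (simp add: sums_unique2)
  qed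
  then show ?thesis by (simp add: vec_eq_iff)
qed

definition vconj :: "complex^'n \<Rightarrow> complex^'n" where
  "vconj x = (\<chi> i. cnj (x $ i))"

definition dotc :: "complex^'n \<Rightarrow> complex^'n \<Rightarrow> complex" where
  "dotc w x = (\<Sum>i\<in>UNIV. w $ i * x $ i)"

lemma cvec_add: "cvec (x + y) = cvec x + cvec y"
  by (simp add: vec_eq_iff cvec_def)

lemma cvec_minus: "cvec (- x) = - cvec x"
  by (simp add: vec_eq_iff cvec_def)

lemma cvec_scaleR: "cvec (c *\<^sub>R x) = c *\<^sub>R cvec x"
  by (simp add: vec_eq_iff cvec_def of_real_def)

lemma cvec_eq_iff: "cvec x = cvec y \<longleftrightarrow> x = y"
  by (simp add: vec_eq_iff cvec_def)

lemma cvec_eq_0_iff [simp]: "cvec x = 0 \<longleftrightarrow> x = 0"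
  by (simp add: vec_eq_iff cvec_def)

lemma cvec_sum: "cvec (\<Sum>a\<in>S. f a) = (\<Sum>a\<in>S. cvec (f a))"
  by (induction S rule: infinite_finite_induct) (auto simp: cvec_add)

lemma norm_cvec: "norm (cvec x) = norm x"
  by (simp add: norm_vec_def cvec_def)

lemma cvec_matrix_vector_mult: "cvec (M *v u) = cmat M *v cvec u"
  by (simp add: vec_eq_iff cvec_def cmat_def matrix_vector_mult_def)

lemma cvec_axis: "cvec (axis i c) = axis i (of_real c)"
  by (simp add: vec_eq_iff cvec_def axis_def)

lemma vconj_smult: "vconj (c *s x) = cnj c *s vconj x"
  by (simp add: vec_eq_iff vconj_def)

lemma cmat_mult_vconj: "cmat A *v vconj x = vconj (cmat A *v x)"
  by (simp add: vec_eq_iff vconj_def cmat_def matrix_vector_mult_def)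

lemma vconj_vector_cmat_mult: "vconj x v* cmat A = vconj (x v* cmat A)"
  by (simp add: vec_eq_iff vconj_def cmat_def vector_matrix_mult_def)

lemma dotc_vconj: "dotc (vconj w) (vconj x) = cnj (dotc w x)"
  by (simp add: dotc_def vconj_def)

lemma dotc_cvec: "dotc w (cvec u) = rowapp w u"
  by (simp add: dotc_def rowapp_def cvec_def)

lemma dotc_vconj_cvec: "dotc (vconj w) (cvec u) = cnj (rowapp w u)"
  by (simp add: dotc_def vconj_def cvec_def rowapp_def)

lemma dotc_axis: "dotc w (axis i c) = w $ i * c"
  by (simp add: dotc_def axis_def if_distrib[where f="\<lambda>a. _ * a"] cong: if_cong)

lemma dotc_smult: "dotc w (c *s x) = c * dotc w x"
  by (simp add: dotc_def sum_distrib_left mult_ac)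

lemma rowapp_scaleR: "rowapp w (c *\<^sub>R u) = of_real c * rowapp w u"
  by (simp add: rowapp_def sum_distrib_left mult_ac)

lemma rowapp_smult: "rowapp (c *s w) u = c * rowapp w u"
  by (simp add: rowapp_def sum_distrib_left mult_ac)

lemma rowapp_axis: "rowapp w (axis i c) = w $ i * of_real c"
  by (simp flip: dotc_cvec add: cvec_axis dotc_axis)

lemma cmod_dotc_le: "cmod (dotc w x) \<le> (\<Sum>i\<in>UNIV. cmod (w $ i)) * norm x"
proof -
  have "cmod (dotc w x) \<le> (\<Sum>i\<in>UNIV. cmod (w $ i) * cmod (x $ i))"
    unfolding dotc_def by (rule order_trans[OF norm_sum]) (simp add: norm_mult)
  also have "\<dots> \<le> (\<Sum>i\<in>UNIV. cmod (w $ i) * norm x)"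
    by (intro sum_mono mult_left_mono Finite_Cartesian_Product.norm_nth_le) auto
  finally show ?thesis by (simp add: sum_distrib_right)
qed

lemma sum_matrix_vector_mult: "(\<Sum>a\<in>S. f a) *v (x::'a::comm_ring_1^'n) = (\<Sum>a\<in>S. f a *v x)"
  by (induction S rule: infinite_finite_induct) (simp_all add: matrix_vector_mult_add_rdistrib)

lemma dotc_vector_matrix_mult: "dotc (w v* B) x = dotc w (B *v x)"
proof -
  have "dotc (w v* B) x = (\<Sum>j\<in>UNIV. \<Sum>i\<in>UNIV. B $ i $ j * w $ i * x $ j)"
    by (simp add: dotc_def vector_matrix_mult_def sum_distrib_left sum_distrib_right mult_ac)
  also have "\<dots> = (\<Sum>i\<in>UNIV. \<Sum>j\<in>UNIV. B $ i $ j * w $ i * x $ j)"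
    by (rule sum.swap)
  also have "\<dots> = dotc w (B *v x)"
    by (simp add: dotc_def matrix_vector_mult_def sum_distrib_left mult_ac)
  finally show ?thesis .
qed

lemma dotc_eq_0_if_eigenvalues_neq:
  assumes "w v* B = a *s w" "B *v x = b *s x" "a \<noteq> b"
  shows "dotc w x = 0"
proof -
  have "a * dotc w x = b * dotc w x"
    using dotc_vector_matrix_mult[of w B x] assms(1,2) by (simp add: dotc_def sum_distrib_left mult_ac)
  then show ?thesis using assms(3) by simp
qed

lemma dual_basis_expansion:
  fixes I :: "'k set" and ww vv :: "'k \<Rightarrow> complex^'n"
  assumes "finite I" "card I = CARD('n)"
    and dual: "\<And>a b. a \<in> I \<Longrightarrow> b \<in> I \<Longrightarrow> dotc (ww a) (vv b) = (if a = b then 1 else 0)"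
  shows "x = (\<Sum>a\<in>I. dotc (ww a) x *s vv a)"
proof -
  obtain e where e: "bij_betw e (UNIV::'n set) I"
    using finite_same_card_bij[of "UNIV::'n set" I] assms(1,2) by auto
  then have e_inj: "e i = e i' \<longleftrightarrow> i = i'" and e_in: "e i \<in> I" for i i'
    by (auto simp: bij_betw_def inj_on_def)
  define W :: "complex^'n^'n" where "W = (\<chi> i l. ww (e i) $ l)"
  define V :: "complex^'n^'n" where "V = (\<chi> k i. vv (e i) $ k)"
  have "W ** V = mat 1"
    using dual[OF e_in e_in]
    by (simp add: vec_eq_iff mat_def W_def V_def matrix_matrix_mult_def dotc_def e_inj)
  then have "V ** W = mat 1" by (rule matrix_left_right_inverse1)
  then have "x = V *v (W *v x)" by (simp add: matrix_vector_mul_assoc)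
  also have "\<dots> = (\<Sum>i\<in>UNIV. dotc (ww (e i)) x *s vv (e i))"
    by (simp add: vec_eq_iff V_def W_def matrix_vector_mult_def dotc_def mult_ac)
  also have "\<dots> = (\<Sum>a\<in>I. dotc (ww a) x *s vv a)"
    by (rule sum.reindex_bij_betw[OF e])
  finally show ?thesis .
qed

lemma eigenvector_plus_vconj_neq_0:
  assumes eig: "cmat A *v z = \<mu> *s z" and "Im \<mu> \<noteq> 0" "z \<noteq> 0"
  shows "z + vconj z \<noteq> 0"
proof
  assume "z + vconj z = 0"
  then have "vconj z = - z" by (simp add: eq_neg_iff_add_eq_0 add.commute)
  then have "cmat A *v (- z) = cnj \<mu> *s (- z)"
    using cmat_mult_vconj[of A z] by (simp add: eig vconj_smult)
  then have "\<mu> = cnj \<mu>"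
    using \<open>z \<noteq> 0\<close> by (simp add: vec.neg eig)
  then show False using \<open>Im \<mu> \<noteq> 0\<close> by (simp add: complex_eq_iff)
qed

section \<open>Vector norms and induced norms\<close>

locale cnorm =
  fixes N :: "complex^'n \<Rightarrow> real"
  assumes is_cnorm: "is_cnorm N"
begin

lemma N_nonneg: "0 \<le> N x"
  and N_eq_0_iff [simp]: "N x = 0 \<longleftrightarrow> x = 0"
  and N_smult: "N (c *s x) = cmod c * N x"
  and N_triangle: "N (x + y) \<le> N x + N y"
  using is_cnorm by (simp_all add: is_cnorm_def)

lemma N_pos: "x \<noteq> 0 \<Longrightarrow> 0 < N x"
  using N_nonneg N_eq_0_iff by (metis less_eq_real_def)

lemma N_0 [simp]: "N 0 = 0"
  by simp

lemma N_minus: "N (- x) = N x"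
  using N_smult[of "-1" x] by simp

lemma N_scaleR: "N (r *\<^sub>R x) = \<bar>r\<bar> * N x"
proof -
  have "r *\<^sub>R x = of_real r *s x" by (simp add: vec_eq_iff of_real_def)
  then show ?thesis by (simp add: N_smult)
qed

lemma N_sum_le: "N (\<Sum>a\<in>S. f a) \<le> (\<Sum>a\<in>S. N (f a))"
proof (induction S rule: infinite_finite_induct)
  case (insert x F)
  then show ?case using N_triangle[of "f x" "sum f F"] by simp
qed simp_all

lemma N_le_norm: "\<exists>B\<ge>0. \<forall>x. N x \<le> B * norm x"
proof (intro exI conjI allI)
  let ?B = "\<Sum>i\<in>UNIV. N (axis i 1)"
  show "0 \<le> ?B" by (intro sum_nonneg N_nonneg)
  fix x
  have "N x = N (\<Sum>i\<in>UNIV. x $ i *s axis i 1)" by (simp add: basis_expansion)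
  also have "\<dots> \<le> (\<Sum>i\<in>UNIV. cmod (x $ i) * N (axis i 1))"
    using N_sum_le[of "\<lambda>i. x $ i *s axis i 1" UNIV] by (simp add: N_smult)
  also have "\<dots> \<le> (\<Sum>i\<in>UNIV. norm x * N (axis i 1))"
    by (intro sum_mono mult_right_mono N_nonneg Finite_Cartesian_Product.norm_nth_le)
  finally show "N x \<le> ?B * norm x" by (simp add: sum_distrib_left mult_ac)
qed

lemma continuous_on_N: "continuous_on S N"
proof -
  obtain B where "B \<ge> 0" and B: "\<And>x. N x \<le> B * norm x" using N_le_norm by blast
  have "\<bar>N x - N y\<bar> \<le> B * dist x y" for x y
    using N_triangle[of y "x - y"] N_triangle[of x "y - x"] N_minus[of "x - y"]
      B[of "x - y"] by (simp add: dist_norm)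
  then have "B-lipschitz_on S N"
    using \<open>B \<ge> 0\<close> by (intro lipschitz_onI) (simp_all add: dist_real_def)
  then show ?thesis by (rule lipschitz_on_continuous_on)
qed

text \<open>The minimum of \<open>N\<close> on the Euclidean unit sphere is positive.\<close>

lemma norm_le_N: "\<exists>C>0. \<forall>x. norm x \<le> C * N x"
proof -
  have "sphere (0::complex^'n) 1 \<noteq> {}" by simp
  then obtain x0 :: "complex^'n" where x0: "x0 \<in> sphere 0 1" and min: "\<forall>y\<in>sphere 0 1. N x0 \<le> N y"
    using continuous_attains_inf[OF compact_sphere _ continuous_on_N] by blast
  have "0 < N x0" using x0 by (intro N_pos) auto
  have "norm x \<le> (1 / N x0) * N x" for x
  proof (cases "x = 0")
    case False
    then have "N x0 \<le> N ((1 / norm x) *\<^sub>R x)" using min by simp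
    then show ?thesis using \<open>0 < N x0\<close> False by (simp add: N_scaleR field_simps)
  qed simp
  then show ?thesis using \<open>0 < N x0\<close> by (intro exI[of _ "1 / N x0"]) auto
qed

lemma cmod_dotc_le_N: "\<exists>K. \<forall>x. cmod (dotc w x) \<le> K * N x"
proof -
  obtain C where "C > 0" and C: "\<And>x. norm x \<le> C * N x" using norm_le_N by blast
  have "cmod (dotc w x) \<le> ((\<Sum>i\<in>UNIV. cmod (w $ i)) * C) * N x" for x
    using cmod_dotc_le[of w x] mult_left_mono[OF C[of x], of "\<Sum>i\<in>UNIV. cmod (w $ i)"]
    by (simp add: sum_nonneg mult.assoc)
  then show ?thesis by blast
qed

lemma rnorm_nonneg: "0 \<le> rnorm N x"
  and rnorm_eq_0_iff [simp]: "rnorm N x = 0 \<longleftrightarrow> x = 0"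
  and rnorm_triangle: "rnorm N (x + y) \<le> rnorm N x + rnorm N y"
  and rnorm_minus: "rnorm N (- x) = rnorm N x"
  and rnorm_scaleR: "rnorm N (c *\<^sub>R x) = \<bar>c\<bar> * rnorm N x"
  by (simp_all add: rnorm_def N_nonneg N_triangle N_minus N_scaleR cvec_add cvec_minus cvec_scaleR)

lemma rnorm_0 [simp]: "rnorm N 0 = 0"
  by simp

lemma rnorm_pos: "x \<noteq> 0 \<Longrightarrow> 0 < rnorm N x"
  using rnorm_nonneg rnorm_eq_0_iff by (metis less_eq_real_def)

lemma rnorm_normalize: "x \<noteq> 0 \<Longrightarrow> rnorm N ((1 / rnorm N x) *\<^sub>R x) = 1"
  using rnorm_pos[of x] by (simp add: rnorm_scaleR)

lemma ex_rnorm_eq_1: "\<exists>u. rnorm N u = 1"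
  using rnorm_normalize[of "axis undefined 1"] by (auto simp: axis_eq_0_iff)

lemma bdd_above_mat_opnorm: "bdd_above {rnorm N (M *v u) | u. rnorm N u = 1}"
proof -
  obtain C where C: "\<And>x. norm x \<le> C * N x" using norm_le_N by blast
  obtain B where "B \<ge> 0" and B: "\<And>x. N x \<le> B * norm x" using N_le_norm by blast
  obtain K where "K > 0" and K: "\<And>x. norm (M *v x) \<le> norm x * K"
    using bounded_linear.pos_bounded[OF matrix_vector_mul_bounded_linear[of M]] by blast
  have "rnorm N (M *v u) \<le> B * (C * K)" if "rnorm N u = 1" for u
  proof -
    have "norm u \<le> C" using C[of "cvec u"] that by (simp add: rnorm_def norm_cvec)
    then have "norm (M *v u) \<le> C * K"
      using order_trans[OF K[of u] mult_right_mono] \<open>K > 0\<close> by simp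
    then show ?thesis
      using order_trans[OF B[of "cvec (M *v u)"] mult_left_mono] \<open>B \<ge> 0\<close>
      by (simp add: rnorm_def norm_cvec)
  qed
  then show ?thesis by (auto simp: bdd_above_def)
qed

lemma rnorm_le_mat_opnorm: "rnorm N u = 1 \<Longrightarrow> rnorm N (M *v u) \<le> mat_opnorm N M"
  unfolding mat_opnorm_def by (rule cSup_upper[OF _ bdd_above_mat_opnorm]) auto

lemma mat_opnorm_le:
  "(\<And>u. rnorm N u = 1 \<Longrightarrow> rnorm N (M *v u) \<le> c) \<Longrightarrow> mat_opnorm N M \<le> c"
  unfolding mat_opnorm_def using ex_rnorm_eq_1 by (intro cSup_least) auto

lemma rnorm_mult_le_mat_opnorm: "rnorm N (M *v u) \<le> mat_opnorm N M * rnorm N u"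
proof (cases "u = 0")
  case False
  have "rnorm N (M *v ((1 / rnorm N u) *\<^sub>R u)) \<le> mat_opnorm N M"
    using rnorm_normalize[OF False] by (rule rnorm_le_mat_opnorm)
  then show ?thesis
    using rnorm_pos[OF False] by (simp add: matrix_vector_mult_scaleR rnorm_scaleR field_simps)
qed simp

lemma mat_opnorm_pos:
  assumes "M *v u \<noteq> 0"
  shows "0 < mat_opnorm N M"
proof -
  have "0 < rnorm N (M *v u)" using assms by (rule rnorm_pos)
  also have "\<dots> \<le> mat_opnorm N M * rnorm N u" by (rule rnorm_mult_le_mat_opnorm)
  finally show ?thesis using rnorm_nonneg[of u] by (simp add: zero_less_mult_iff)
qed

lemma mat_opnorm_nonneg: "0 \<le> mat_opnorm N M"
proof -
  obtain u where "rnorm N u = 1" using ex_rnorm_eq_1 by blast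
  then show ?thesis using rnorm_le_mat_opnorm[of u M] rnorm_nonneg[of "M *v u"] by linarith
qed

lemma mat_opnorm_triangle: "mat_opnorm N (M1 + M2) \<le> mat_opnorm N M1 + mat_opnorm N M2"
proof (rule mat_opnorm_le)
  fix u :: "real^'n" assume "rnorm N u = 1"
  then show "rnorm N ((M1 + M2) *v u) \<le> mat_opnorm N M1 + mat_opnorm N M2"
    using rnorm_triangle[of "M1 *v u" "M2 *v u"]
      rnorm_le_mat_opnorm[of u M1] rnorm_le_mat_opnorm[of u M2]
    by (simp add: matrix_vector_mult_add_rdistrib)
qed

lemma mat_opnorm_scaleR_le: "mat_opnorm N (c *\<^sub>R M) \<le> \<bar>c\<bar> * mat_opnorm N M"
proof (rule mat_opnorm_le)
  fix u :: "real^'n"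
  assume "rnorm N u = 1"
  moreover have "(c *\<^sub>R M) *v u = c *\<^sub>R (M *v u)"
    by (rule scaleR_matrix_vector_assoc[symmetric])
  ultimately show "rnorm N ((c *\<^sub>R M) *v u) \<le> \<bar>c\<bar> * mat_opnorm N M"
    by (simp add: rnorm_scaleR rnorm_le_mat_opnorm mult_left_mono)
qed

lemma mat_opnorm_scaleR: "mat_opnorm N (c *\<^sub>R M) = \<bar>c\<bar> * mat_opnorm N M"
proof (cases "c = 0")
  case True
  then show ?thesis
    using mat_opnorm_scaleR_le[of 0 M] mat_opnorm_nonneg[of "0 *\<^sub>R M"] by simp
next
  case False
  have "mat_opnorm N M \<le> \<bar>1 / c\<bar> * mat_opnorm N (c *\<^sub>R M)"
    using mat_opnorm_scaleR_le[of "1 / c" "c *\<^sub>R M"] False by simp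
  then show ?thesis
    using mat_opnorm_scaleR_le[of c M] False by (simp add: field_simps)
qed

lemma mat_opnorm_0: "mat_opnorm N 0 = 0"
  using mat_opnorm_scaleR[of 0 0] by simp

lemma mat_opnorm_minus: "mat_opnorm N (- M) = mat_opnorm N M"
  using mat_opnorm_scaleR[of "-1" M] by simp

lemma bdd_above_row_norm: "bdd_above {cmod (dotc w u) | u. N u = 1}"
proof -
  obtain K where K: "\<And>x. cmod (dotc w x) \<le> K * N x" using cmod_dotc_le_N by blast
  show ?thesis
  proof (rule bdd_aboveI)
    fix x assume "x \<in> {cmod (dotc w u) | u. N u = 1}"
    then obtain u where "x = cmod (dotc w u)" "N u = 1" by blast
    then show "x \<le> K" using K[of u] by simp
  qed
qed

lemma bdd_above_real_row_norm: "bdd_above {cmod (rowapp w u) | u. rnorm N u = 1}"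
  by (rule bdd_above_mono[OF bdd_above_row_norm[of w]]) (auto simp: rnorm_def simp flip: dotc_cvec)

lemma rowapp_le_row_norm:
  "is_real_vec w \<Longrightarrow> rnorm N u = 1 \<Longrightarrow> cmod (rowapp w u) \<le> row_norm N w"
  unfolding row_norm_def by (auto intro: cSup_upper[OF _ bdd_above_real_row_norm])

lemma row_norm_le:
  "is_real_vec w \<Longrightarrow> (\<And>u. rnorm N u = 1 \<Longrightarrow> cmod (rowapp w u) \<le> c) \<Longrightarrow> row_norm N w \<le> c"
  unfolding row_norm_def using ex_rnorm_eq_1 by (auto intro: cSup_least)

lemma row_norm_pos:
  assumes "w \<noteq> 0"
  shows "0 < row_norm N w"
proof -
  obtain i where "w $ i \<noteq> 0" using assms by (auto simp: vec_eq_iff)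
  show ?thesis
  proof (cases "is_real_vec w")
    case True
    define u :: "real^'n" where "u = (1 / rnorm N (axis i 1)) *\<^sub>R axis i 1"
    have "0 < rnorm N (axis i 1 :: real^'n)" by (rule rnorm_pos) (simp add: axis_eq_0_iff)
    then have "0 < cmod (rowapp w u)"
      using \<open>w $ i \<noteq> 0\<close> by (simp add: u_def rowapp_scaleR rowapp_axis)
    also have "\<dots> \<le> row_norm N w"
      unfolding u_def by (intro rowapp_le_row_norm True rnorm_normalize) (simp add: axis_eq_0_iff)
    finally show ?thesis .
  next
    case False
    define u :: "complex^'n" where "u = of_real (1 / N (axis i 1)) *s axis i 1"
    have "0 < N (axis i 1 :: complex^'n)" by (rule N_pos) (simp add: axis_eq_0_iff)
    then have "N u = 1" and "0 < cmod (dotc w u)"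
      using \<open>w $ i \<noteq> 0\<close> by (simp_all add: u_def N_smult norm_divide dotc_smult dotc_axis)
    have "cmod (dotc w u) \<in> {cmod (dotc w u) | u. N u = 1}"
      using \<open>N u = 1\<close> by blast
    then have "cmod (dotc w u) \<le> row_norm N w"
      using False cSup_upper[OF _ bdd_above_row_norm] by (simp add: row_norm_def dotc_def)
    with \<open>0 < cmod (dotc w u)\<close> show ?thesis by linarith
  qed
qed

lemma mat_opnorm_eq_row_norm:
  assumes "is_real_vec w" "0 < c" "\<And>u. rnorm N (M *v u) = c * cmod (rowapp w u)"
  shows "mat_opnorm N M = c * row_norm N w"
proof (rule antisym)
  show "mat_opnorm N M \<le> c * row_norm N w"
    using assms by (intro mat_opnorm_le) (simp add: rowapp_le_row_norm)
  have "row_norm N w \<le> mat_opnorm N M / c"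
    using assms rnorm_le_mat_opnorm[of _ M]
    by (intro row_norm_le) (simp_all add: field_simps)
  then show "c * row_norm N w \<le> mat_opnorm N M"
    using assms(2) by (simp add: field_simps)
qed

end

lemma Re_cis_mult_mult: "Re (cis \<theta> * a * b) = cmod a * cmod b * cos (\<theta> + Arg a + Arg b)"
proof -
  have "cis \<theta> * a * b = rcis 1 \<theta> * rcis (cmod a) (Arg a) * rcis (cmod b) (Arg b)"
    by (simp add: rcis_cmod_Arg cis_rcis_eq)
  also have "\<dots> = rcis (cmod a * cmod b) (\<theta> + Arg a + Arg b)"
    by (simp add: rcis_mult)
  finally show ?thesis by simp
qed

lemma Theta_m_mult_vec: "Theta_m \<omega> vh wh t *v u = cmod (rowapp wh u) *\<^sub>R Theta_u \<omega> vh wh t u"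
proof -
  have "(Theta_m \<omega> vh wh t *v u) $ k = cmod (rowapp wh u) * Theta_u \<omega> vh wh t u $ k" for k
  proof -
    have "(Theta_m \<omega> vh wh t *v u) $ k = (\<Sum>l\<in>UNIV. Re (cis (\<omega> * t) * vh $ k * wh $ l) * u $ l)"
      unfolding Theta_m_def matrix_vector_mult_def Re_cis_mult_mult by simp
    also have "\<dots> = Re (cis (\<omega> * t) * vh $ k * rowapp wh u)"
      by (simp add: rowapp_def sum_distrib_left algebra_simps)
    also have "\<dots> = cmod (rowapp wh u) * Theta_u \<omega> vh wh t u $ k"
      unfolding Re_cis_mult_mult Theta_u_def by simp
    finally show ?thesis .
  qed
  then show ?thesis by (simp add: vec_eq_iff)
qed

lemma approx_prec_leading_term:
  fixes nrm :: "'a::ab_group_add \<Rightarrow> real"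
  assumes zero: "nrm 0 = 0" and triangle: "\<And>x y. nrm (x + y) \<le> nrm x + nrm y"
    and minus: "\<And>x. nrm (- x) = nrm x" and pos: "0 < nrm x"
  shows "approx_prec (nrm (x + (\<Sum>j\<in>S. y j))) (nrm x) ((\<Sum>j\<in>S. nrm (y j)) / nrm x)"
proof -
  let ?R = "\<Sum>j\<in>S. y j"
  have "nrm ?R \<le> (\<Sum>j\<in>S. nrm (y j))"
  proof (induction S rule: infinite_finite_induct)
    case (insert j S)
    then show ?case using triangle[of "y j" "sum y S"] by simp
  qed (simp_all add: zero)
  moreover have "nrm (x + ?R) \<le> nrm x + nrm ?R" by (rule triangle)
  moreover have "nrm x \<le> nrm (x + ?R) + nrm ?R"
    using triangle[of "x + ?R" "- ?R"] minus[of ?R] by simp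
  ultimately have "\<bar>(nrm (x + ?R) - nrm x) / nrm x\<bar> \<le> (\<Sum>j\<in>S. nrm (y j)) / nrm x"
    using pos by (simp add: abs_divide divide_right_mono)
  moreover have "nrm (x + ?R) = nrm x * (1 + (nrm (x + ?R) - nrm x) / nrm x)"
    using pos by (simp add: field_simps)
  ultimately show ?thesis unfolding approx_prec_def by blast
qed

lemma approx_prec_divide:
  assumes "approx_prec a a' \<epsilon>" "approx_prec b b' \<delta>" "\<delta> < 1" "0 < b'"
  shows "approx_prec (a / b) (a' / b') ((\<epsilon> + \<delta>) / (1 - \<delta>))"
proof -
  obtain x y where x: "\<bar>x\<bar> \<le> \<epsilon>" "a = a' * (1 + x)" and y: "\<bar>y\<bar> \<le> \<delta>" "b = b' * (1 + y)"
    using assms(1,2) unfolding approx_prec_def by blast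
  have "0 < 1 + y" using y(1) assms(3) by linarith
  have "a / b = a' / b' * (1 + (x - y) / (1 + y))"
    using \<open>0 < 1 + y\<close> assms(4) by (simp add: x(2) y(2) field_simps)
  moreover have "\<bar>(x - y) / (1 + y)\<bar> \<le> (\<epsilon> + \<delta>) / (1 - \<delta>)"
  proof -
    have "\<bar>(x - y) / (1 + y)\<bar> \<le> (\<epsilon> + \<delta>) / (1 + y)"
      using \<open>0 < 1 + y\<close> x(1) y(1) by (simp add: abs_divide divide_right_mono)
    also have "\<dots> \<le> (\<epsilon> + \<delta>) / (1 - \<delta>)"
      using \<open>0 < 1 + y\<close> x(1) y(1) assms(3) by (intro divide_left_mono) auto
    finally show ?thesis .
  qed
  ultimately show ?thesis unfolding approx_prec_def by blast
qed

section \<open>Spectral decomposition of the matrix exponential\<close>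

locale spectral_data = cnorm N for N :: "complex^'n \<Rightarrow> real" +
  fixes A :: "real^'n^'n" and q :: nat and r :: "nat \<Rightarrow> real" and lam :: "nat \<Rightarrow> complex"
    and w v :: "nat \<Rightarrow> complex^'n"
  assumes real_parts: "Re ` eigenvalues A = r ` {1..q}"
    and r_decr: "\<forall>i\<in>{1..q}. \<forall>j\<in>{1..q}. i < j \<longrightarrow> r j < r i"
    and classes: "\<forall>j\<in>{1..q}. eig_class A (r j) (lam j)"
    and eigvecs: "\<forall>j\<in>{1..q}.
         w j \<noteq> 0 \<and> w j v* cmat A = lam j *s w j \<and>
         v j \<noteq> 0 \<and> cmat A *v v j = lam j *s v j \<and>
         (\<Sum>i\<in>UNIV. w j $ i * v j $ i) = 1 \<and>
         (Im (lam j) = 0 \<longrightarrow> is_real_vec (w j) \<and> is_real_vec (v j))"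
begin

lemma
  assumes "j \<in> {1..q}"
  shows lam_in_eigenvalues: "lam j \<in> eigenvalues A"
    and Re_lam: "Re (lam j) = r j"
    and order_lam: "order (lam j) (charpoly A) = 1"
    and cnj_lam_in_eigenvalues: "Im (lam j) \<noteq> 0 \<Longrightarrow> cnj (lam j) \<in> eigenvalues A"
    and order_cnj_lam: "Im (lam j) \<noteq> 0 \<Longrightarrow> order (cnj (lam j)) (charpoly A) = 1"
    and eigenvalues_with_Re: "{\<nu> \<in> eigenvalues A. Re \<nu> = r j} \<subseteq> {lam j, cnj (lam j)}"
  using classes assms unfolding eig_class_def simple_eig_def Let_def
  by (auto simp: set_eq_iff; metis)+

lemma
  assumes "j \<in> {1..q}"
  shows w_neq_0: "w j \<noteq> 0" and v_neq_0: "v j \<noteq> 0"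
    and w_eigen: "w j v* cmat A = lam j *s w j" and v_eigen: "cmat A *v v j = lam j *s v j"
    and dotc_w_v: "dotc (w j) (v j) = 1"
    and real_w: "Im (lam j) = 0 \<Longrightarrow> is_real_vec (w j)"
    and real_v: "Im (lam j) = 0 \<Longrightarrow> is_real_vec (v j)"
  using eigvecs assms by (simp_all add: dotc_def)

lemma eigenvalue_cases:
  assumes "\<mu> \<in> eigenvalues A"
  obtains j where "j \<in> {1..q}" "\<mu> = lam j \<or> (Im (lam j) \<noteq> 0 \<and> \<mu> = cnj (lam j))"
proof -
  from assms real_parts obtain j where j: "j \<in> {1..q}" "Re \<mu> = r j" by force
  with eigenvalues_with_Re[OF j(1)] assms have "\<mu> = lam j \<or> \<mu> = cnj (lam j)" by auto
  with j that show ?thesis by (cases "Im (lam j) = 0") (auto simp: complex_eq_iff)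
qed

lemma eigenvalues_simple: "\<forall>\<mu>\<in>eigenvalues A. order \<mu> (charpoly A) = 1"
  by (metis eigenvalue_cases order_lam order_cnj_lam)

lemma q_pos: "1 \<le> q"
proof -
  have "eigenvalues A \<noteq> {}"
    using card_eigenvalues_if_simple[OF eigenvalues_simple] by auto
  then obtain \<mu> where "\<mu> \<in> eigenvalues A" by blast
  then show ?thesis by (rule eigenvalue_cases) auto
qed

text \<open>The spectrum indexed by pairs \<open>(j, b)\<close>: \<open>b\<close> selects the conjugate of \<open>lam j\<close>,
  which occurs only for a complex class.\<close>

definition spec_index :: "(nat \<times> bool) set" where
  "spec_index = {(j, b). j \<in> {1..q} \<and> (b \<longrightarrow> Im (lam j) \<noteq> 0)}"

definition spec_val :: "nat \<times> bool \<Rightarrow> complex" where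
  "spec_val = (\<lambda>(j, b). if b then cnj (lam j) else lam j)"

definition spec_right :: "nat \<times> bool \<Rightarrow> complex^'n" where
  "spec_right = (\<lambda>(j, b). if b then vconj (v j) else v j)"

definition spec_left :: "nat \<times> bool \<Rightarrow> complex^'n" where
  "spec_left = (\<lambda>(j, b). if b then vconj (w j) else w j)"

lemma finite_spec_index: "finite spec_index"
  by (rule finite_subset[of _ "{1..q} \<times> UNIV"]) (auto simp: spec_index_def)

lemma sum_spec_index:
  "(\<Sum>a\<in>spec_index. F a)
    = (\<Sum>j\<in>{1..q}. F (j, False) + (if Im (lam j) \<noteq> 0 then F (j, True) else 0))"
proof -
  have "spec_index = Sigma {1..q} (\<lambda>j. if Im (lam j) \<noteq> 0 then UNIV else {False})"
    by (auto simp: spec_index_def split: if_splits)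
  then have "(\<Sum>a\<in>spec_index. F a)
      = (\<Sum>j\<in>{1..q}. \<Sum>b\<in>(if Im (lam j) \<noteq> 0 then UNIV else {False}). F (j, b))"
    by (simp add: sum.Sigma)
  also have "\<dots> = (\<Sum>j\<in>{1..q}. F (j, False) + (if Im (lam j) \<noteq> 0 then F (j, True) else 0))"
    by (intro sum.cong refl) (simp add: UNIV_bool)
  finally show ?thesis .
qed

lemma inj_on_spec_val: "inj_on spec_val spec_index"
proof
  fix a b assume a: "a \<in> spec_index" and b: "b \<in> spec_index" and eq: "spec_val a = spec_val b"
  obtain i c j d where ab: "a = (i, c)" "b = (j, d)" by force
  with a b have ij: "i \<in> {1..q}" "j \<in> {1..q}" by (auto simp: spec_index_def)
  have "r i = r j"
    using arg_cong[OF eq, of Re] ab Re_lam[OF ij(1)] Re_lam[OF ij(2)]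
    by (auto simp: spec_val_def split: if_splits)
  then have "i = j"
    using r_decr ij by (metis linorder_neqE_nat less_irrefl)
  moreover have "c = d"
    using eq a b ab \<open>i = j\<close> by (auto simp: spec_val_def spec_index_def complex_eq_iff split: if_splits)
  ultimately show "a = b" using ab by simp
qed

lemma spec_val_image: "spec_val ` spec_index = eigenvalues A"
proof
  show "spec_val ` spec_index \<subseteq> eigenvalues A"
    using lam_in_eigenvalues cnj_lam_in_eigenvalues by (auto simp: spec_index_def spec_val_def)
  show "eigenvalues A \<subseteq> spec_val ` spec_index"
  proof
    fix \<mu> assume "\<mu> \<in> eigenvalues A"
    then obtain j where "j \<in> {1..q}" "\<mu> = lam j \<or> (Im (lam j) \<noteq> 0 \<and> \<mu> = cnj (lam j))"
      by (rule eigenvalue_cases)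
    then show "\<mu> \<in> spec_val ` spec_index"
      by (auto simp: spec_index_def spec_val_def image_iff
          intro: bexI[of _ "(j, False)"] bexI[of _ "(j, True)"])
  qed
qed

lemma card_spec_index: "card spec_index = CARD('n)"
  using card_image[OF inj_on_spec_val] card_eigenvalues_if_simple(2)[OF eigenvalues_simple]
  by (simp add: spec_val_image)

lemma spec_right_eigen: "a \<in> spec_index \<Longrightarrow> cmat A *v spec_right a = spec_val a *s spec_right a"
  by (auto simp: spec_index_def spec_right_def spec_val_def cmat_mult_vconj vconj_smult v_eigen)

lemma spec_left_eigen: "a \<in> spec_index \<Longrightarrow> spec_left a v* cmat A = spec_val a *s spec_left a"
  by (auto simp: spec_index_def spec_left_def spec_val_def vconj_vector_cmat_mult vconj_smult w_eigen)

lemma dotc_spec_left_right: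
  assumes "a \<in> spec_index" "b \<in> spec_index"
  shows "dotc (spec_left a) (spec_right b) = (if a = b then 1 else 0)"
proof (cases "a = b")
  case True
  then show ?thesis
    using assms by (auto simp: spec_index_def spec_left_def spec_right_def dotc_vconj dotc_w_v)
next
  case False
  then have "spec_val a \<noteq> spec_val b" using inj_on_spec_val assms by (auto simp: inj_on_def)
  with False show ?thesis
    using dotc_eq_0_if_eigenvalues_neq[OF spec_left_eigen[OF assms(1)] spec_right_eigen[OF assms(2)]]
    by simp
qed

lemma cmat_mexp_mult_expansion:
  "cmat (mexp t A) *v x
     = (\<Sum>a\<in>spec_index. (dotc (spec_left a) x * exp (of_real t * spec_val a)) *s spec_right a)"
proof -
  have "cmat (mexp t A) *v x
      = (\<Sum>a\<in>spec_index. cmat (mexp t A) *v (dotc (spec_left a) x *s spec_right a))"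
    by (subst dual_basis_expansion[OF finite_spec_index card_spec_index dotc_spec_left_right, of x])
      (simp_all add: vec.sum)
  also have "\<dots> = (\<Sum>a\<in>spec_index. (dotc (spec_left a) x * exp (of_real t * spec_val a)) *s spec_right a)"
    by (intro sum.cong refl)
      (simp add: vector_scalar_commute cmat_mexp_mult_eigenvector[OF spec_right_eigen] mult_ac)
  finally show ?thesis .
qed

definition mode :: "real \<Rightarrow> nat \<Rightarrow> real^'n \<Rightarrow> complex^'n" where
  "mode t j u = (exp (of_real t * lam j) * rowapp (w j) u) *s v j"

text \<open>The part of \<open>e^(tA)\<close> belonging to \<open>Lambda_j\<close>: \<open>e^(t lam_j) v_j w_j\<close>, plus its
  complex conjugate (that is, twice its real part) when \<open>Lambda_j\<close> is complex.\<close>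

definition component :: "real \<Rightarrow> nat \<Rightarrow> real^'n^'n" where
  "component t j = (\<chi> k l. (if Im (lam j) = 0 then 1 else 2) *
     Re (exp (of_real t * lam j) * v j $ k * w j $ l))"

lemma component_mult:
  "component t j *v u = (\<chi> k. (if Im (lam j) = 0 then 1 else 2) * Re (mode t j u $ k))"
  by (simp add: vec_eq_iff component_def mode_def matrix_vector_mult_def rowapp_def
      sum_distrib_left sum_distrib_right algebra_simps)

lemma cvec_component_mult:
  assumes "j \<in> {1..q}"
  shows "cvec (component t j *v u) = mode t j u + (if Im (lam j) = 0 then 0 else vconj (mode t j u))"
proof (cases "Im (lam j) = 0")
  case True
  have "Im (rowapp (w j) u) = 0"
    using real_w[OF assms True] by (simp add: rowapp_def is_real_vec_def Im_sum)
  moreover have "Im (exp (of_real t * lam j)) = 0"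
    using True by (simp add: exp_eq_polar)
  ultimately show ?thesis
    using real_v[OF assms True] True
    by (simp add: component_mult vec_eq_iff cvec_def mode_def is_real_vec_def complex_eq_iff)
next
  case False
  then show ?thesis
    by (simp add: component_mult vec_eq_iff cvec_def vconj_def complex_eq_iff)
qed

lemma mexp_mult_eq_sum_component: "mexp t A *v u = (\<Sum>j\<in>{1..q}. component t j *v u)"
proof -
  define F where "F a = (dotc (spec_left a) (cvec u) * exp (of_real t * spec_val a)) *s spec_right a" for a
  have F_False: "F (j, False) = mode t j u" for j
    by (simp add: F_def spec_left_def spec_right_def spec_val_def dotc_cvec mode_def mult.commute)
  have F_True: "F (j, True) = vconj (mode t j u)" for j
    by (simp add: F_def spec_left_def spec_right_def spec_val_def mode_def vconj_smult exp_cnj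
        dotc_vconj_cvec)
  have "cvec (mexp t A *v u) = (\<Sum>a\<in>spec_index. F a)"
    by (simp add: cvec_matrix_vector_mult cmat_mexp_mult_expansion F_def)
  also have "\<dots> = (\<Sum>j\<in>{1..q}. cvec (component t j *v u))"
    unfolding sum_spec_index by (intro sum.cong refl) (simp add: cvec_component_mult F_False F_True)
  finally show ?thesis by (simp add: cvec_eq_iff flip: cvec_sum)
qed

lemma mexp_eq_sum_component: "mexp t A = (\<Sum>j\<in>{1..q}. component t j)"
  by (simp add: matrix_eq sum_matrix_vector_mult mexp_mult_eq_sum_component)

end

section \<open>Norms of the spectral components\<close>

context spectral_data
begin

abbreviation wh :: "nat \<Rightarrow> complex^'n" where "wh j \<equiv> normalize_row N (w j)"
abbreviation vh :: "nat \<Rightarrow> complex^'n" where "vh j \<equiv> normalize_vec N (v j)"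

lemma row_norm_w_pos: "j \<in> {1..q} \<Longrightarrow> 0 < row_norm N (w j)"
  by (simp add: row_norm_pos w_neq_0)

lemma N_v_pos: "j \<in> {1..q} \<Longrightarrow> 0 < N (v j)"
  by (simp add: N_pos v_neq_0)

lemma fcond_pos: "j \<in> {1..q} \<Longrightarrow> 0 < fcond N w v j"
  by (simp add: fcond_def row_norm_w_pos N_v_pos)

lemma w_eq_smult_wh: "j \<in> {1..q} \<Longrightarrow> w j = of_real (row_norm N (w j)) *s wh j"
  using row_norm_w_pos[of j] by (simp add: normalize_row_def vec_eq_iff)

lemma v_eq_smult_vh: "j \<in> {1..q} \<Longrightarrow> v j = of_real (N (v j)) *s vh j"
  using N_v_pos[of j] v_neq_0[of j] by (simp add: normalize_vec_def vec_eq_iff)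

lemma N_vh: "j \<in> {1..q} \<Longrightarrow> N (vh j) = 1"
  using N_v_pos[of j] v_neq_0[of j] by (simp add: normalize_vec_def N_smult norm_divide)

lemma Im_rowapp_wh: "j \<in> {1..q} \<Longrightarrow> Im (lam j) = 0 \<Longrightarrow> Im (rowapp (wh j) u) = 0"
  using real_w[of j] by (simp add: normalize_row_def rowapp_def is_real_vec_def Im_sum)

lemma exp_lam:
  "j \<in> {1..q} \<Longrightarrow> exp (of_real t * lam j) = of_real (exp (r j * t)) * cis (Im (lam j) * t)"
  using Re_lam[of j] by (subst exp_eq_polar) (simp add: mult_ac)

lemma exp_lam_v_w:
  assumes "j \<in> {1..q}"
  shows "exp (of_real t * lam j) * v j $ k * w j $ l
    = of_real (exp (r j * t) * fcond N w v j) * (cis (Im (lam j) * t) * vh j $ k * wh j $ l)"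
  by (subst v_eq_smult_vh[OF assms], subst w_eq_smult_wh[OF assms])
    (simp add: exp_lam[OF assms] fcond_def mult_ac)

lemma mode_eq:
  assumes "j \<in> {1..q}"
  shows "mode t j u
    = (of_real (exp (r j * t) * fcond N w v j) * cis (Im (lam j) * t) * rowapp (wh j) u) *s vh j"
  unfolding mode_def
  by (subst v_eq_smult_vh[OF assms], subst w_eq_smult_wh[OF assms])
    (simp add: exp_lam[OF assms] fcond_def rowapp_smult vec_eq_iff mult_ac)

lemma mode_eigen: "j \<in> {1..q} \<Longrightarrow> cmat A *v mode t j u = lam j *s mode t j u"
  by (simp add: mode_def vector_scalar_commute v_eigen vector_smult_assoc mult.commute)

lemma mode_neq_0: "j \<in> {1..q} \<Longrightarrow> rowapp (w j) u \<noteq> 0 \<Longrightarrow> mode t j u \<noteq> 0"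
  by (simp add: mode_def v_neq_0)

lemma component_mult_neq_0:
  assumes "j \<in> {1..q}" "rowapp (w j) u \<noteq> 0"
  shows "component t j *v u \<noteq> 0"
proof -
  have "cvec (component t j *v u) \<noteq> 0"
    using eigenvector_plus_vconj_neq_0[OF mode_eigen[OF assms(1)] _ mode_neq_0[OF assms]]
      mode_neq_0[OF assms]
    by (simp add: cvec_component_mult[OF assms(1)])
  then show ?thesis by simp
qed

lemma component_nonreal:
  assumes j: "j \<in> {1..q}" and "Im (lam j) \<noteq> 0"
  shows "component t j = (2 * exp (r j * t) * fcond N w v j) *\<^sub>R Thm N lam w v j t"
proof -
  have Re_scale: "Re (of_real a * z) = a * Re z" for a z by simp
  have "component t j $ k $ l = 2 * (exp (r j * t) * fcond N w v j) *
      (cmod (vh j $ k) * cmod (wh j $ l) * cos (Im (lam j) * t + Arg (vh j $ k) + Arg (wh j $ l)))"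
    for k l
    using assms
    by (simp only: component_def vec_lambda_beta exp_lam_v_w[OF j] Re_scale
        Re_cis_mult_mult if_False)
  then show ?thesis by (simp add: vec_eq_iff Thm_def Theta_m_def)
qed

lemma component_mult_real:
  assumes j: "j \<in> {1..q}" and real: "Im (lam j) = 0"
  shows "component t j *v u
    = (exp (r j * t) * fcond N w v j * Re (rowapp (wh j) u)) *\<^sub>R (\<chi> k. Re (vh j $ k))"
  using Im_rowapp_wh[OF j real, of u] real
  by (simp add: component_mult mode_eq[OF j] vec_eq_iff)

lemma Thm_mult: "Thm N lam w v j t *v u = cmod (rowapp (wh j) u) *\<^sub>R Thu N lam w v j t u"
  by (simp add: Thm_def Thu_def Theta_m_mult_vec)

definition gain_u :: "real \<Rightarrow> nat \<Rightarrow> real^'n \<Rightarrow> real" where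
  "gain_u t j u = (if Im (lam j) = 0 then 1 else 2 * rnorm N (Thu N lam w v j t u))"

definition gain_m :: "real \<Rightarrow> nat \<Rightarrow> real" where
  "gain_m t j = (if Im (lam j) = 0 then 1 else 2 * mat_opnorm N (Thm N lam w v j t))"

lemma Gu_eq: "Gu N lam w v j t u = gain_u t j u / gain_u t 1 u"
  by (simp add: Gu_def gain_u_def)

lemma Gm_eq: "Gm N lam w v j t = gain_m t j / gain_m t 1"
  by (simp add: Gm_def gain_m_def)

lemma rnorm_component_mult:
  assumes j: "j \<in> {1..q}"
  shows "rnorm N (component t j *v u)
    = exp (r j * t) * fcond N w v j * cmod (rowapp (wh j) u) * gain_u t j u"
proof (cases "Im (lam j) = 0")
  case True
  have "cvec (\<chi> k. Re (vh j $ k)) = vh j"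
    using real_v[OF j True] by (simp add: vec_eq_iff cvec_def normalize_vec_def is_real_vec_def complex_eq_iff)
  then have "rnorm N (\<chi> k. Re (vh j $ k)) = 1" by (simp add: rnorm_def N_vh[OF j])
  then show ?thesis
    using fcond_pos[OF j] True
    by (simp add: component_mult_real[OF j True] rnorm_scaleR gain_u_def abs_mult
        cmod_eq_Re[OF Im_rowapp_wh[OF j True]])
next
  case False
  have "component t j *v u
      = (2 * exp (r j * t) * fcond N w v j * cmod (rowapp (wh j) u)) *\<^sub>R Thu N lam w v j t u"
    by (simp add: component_nonreal[OF j False] scaleR_matrix_vector_assoc[symmetric] Thm_mult)
  then show ?thesis
    using fcond_pos[OF j] False by (simp add: rnorm_scaleR gain_u_def abs_mult)
qed

lemma mat_opnorm_component:
  assumes j: "j \<in> {1..q}"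
  shows "mat_opnorm N (component t j) = exp (r j * t) * fcond N w v j * gain_m t j"
proof (cases "Im (lam j) = 0")
  case True
  define c where "c = exp (r j * t) * fcond N w v j / row_norm N (w j)"
  have "0 < c" using fcond_pos[OF j] row_norm_w_pos[OF j] by (simp add: c_def)
  have "rnorm N (component t j *v u) = c * cmod (rowapp (w j) u)" for u
    using row_norm_w_pos[OF j] True
    by (simp add: rnorm_component_mult[OF j] c_def gain_u_def normalize_row_def rowapp_smult
        norm_mult norm_divide)
  then have "mat_opnorm N (component t j) = c * row_norm N (w j)"
    using real_w[OF j True] \<open>0 < c\<close> by (intro mat_opnorm_eq_row_norm)
  then show ?thesis
    using row_norm_w_pos[OF j] True by (simp add: c_def gain_m_def)
next
  case False
  then show ?thesis
    using fcond_pos[OF j] by (simp add: component_nonreal[OF j False] mat_opnorm_scaleR gain_m_def abs_mult)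
qed

lemma one_in_range: "1 \<in> {1..q}"
  using q_pos by simp

lemma eps_u_eq:
  "eps_u N q r lam w v t u
    = (\<Sum>j\<in>{2..q}. rnorm N (component t j *v u)) / rnorm N (component t 1 *v u)"
  unfolding eps_u_def sum_divide_distrib
proof (rule sum.cong[OF refl])
  fix j assume "j \<in> {2..q}"
  then have j: "j \<in> {1..q}" by simp
  show "exp ((r j - r 1) * t) * (fcond N w v j / fcond N w v 1)
      * (cmod (rowapp (wh j) u) / cmod (rowapp (wh 1) u)) * Gu N lam w v j t u
      = rnorm N (component t j *v u) / rnorm N (component t 1 *v u)"
    unfolding Gu_eq rnorm_component_mult[OF j] rnorm_component_mult[OF one_in_range]
    by (simp add: left_diff_distrib exp_diff)
qed

lemma eps_m_eq:
  "eps_m N q r lam w v t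
    = (\<Sum>j\<in>{2..q}. mat_opnorm N (component t j)) / mat_opnorm N (component t 1)"
  unfolding eps_m_def sum_divide_distrib
proof (rule sum.cong[OF refl])
  fix j assume "j \<in> {2..q}"
  then have j: "j \<in> {1..q}" by simp
  show "exp ((r j - r 1) * t) * (fcond N w v j / fcond N w v 1) * Gm N lam w v j t
      = mat_opnorm N (component t j) / mat_opnorm N (component t 1)"
    unfolding Gm_eq mat_opnorm_component[OF j] mat_opnorm_component[OF one_in_range]
    by (simp add: left_diff_distrib exp_diff)
qed

lemma Kinf_z_eq:
  "Kinf_z N lam w v t y z = rnorm N (component t 1 *v z) / rnorm N (component t 1 *v y)"
  unfolding Kinf_z_def rnorm_component_mult[OF one_in_range] gain_u_def
  using fcond_pos[OF one_in_range] by simp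

lemma Kinf_m_eq:
  "Kinf_m N lam w v t y = mat_opnorm N (component t 1) / rnorm N (component t 1 *v y)"
  unfolding Kinf_m_def rnorm_component_mult[OF one_in_range] mat_opnorm_component[OF one_in_range]
    gain_u_def gain_m_def
  using fcond_pos[OF one_in_range] by simp

lemma mexp_eq_component_1_plus: "mexp t A = component t 1 + (\<Sum>j\<in>{2..q}. component t j)"
proof -
  have "{1..q} = insert 1 {2..q}" using q_pos by auto
  then show ?thesis by (simp add: mexp_eq_sum_component)
qed

lemma approx_prec_rnorm_mexp_mult:
  assumes "rowapp (w 1) u \<noteq> 0"
  shows "approx_prec (rnorm N (mexp t A *v u)) (rnorm N (component t 1 *v u)) (eps_u N q r lam w v t u)"
  unfolding eps_u_eq mexp_eq_component_1_plus matrix_vector_mult_add_rdistrib sum_matrix_vector_mult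
  using rnorm_0 rnorm_triangle rnorm_minus rnorm_pos[OF component_mult_neq_0[OF one_in_range assms]]
  by (rule approx_prec_leading_term[where nrm="rnorm N"])

lemma approx_prec_mat_opnorm_mexp:
  assumes "rowapp (w 1) u \<noteq> 0"
  shows "approx_prec (mat_opnorm N (mexp t A)) (mat_opnorm N (component t 1)) (eps_m N q r lam w v t)"
  unfolding eps_m_eq mexp_eq_component_1_plus
  using mat_opnorm_0 mat_opnorm_triangle mat_opnorm_minus
    mat_opnorm_pos[OF component_mult_neq_0[OF one_in_range assms]]
  by (rule approx_prec_leading_term[where nrm="mat_opnorm N"])

end

theorem theorem11:
  fixes A :: "real^'n^'n" and N :: "complex^'n \<Rightarrow> real"
    and q :: nat and r :: "nat \<Rightarrow> real" and lam :: "nat \<Rightarrow> complex"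
    and w v :: "nat \<Rightarrow> complex^'n" and y0 z0 :: "real^'n" and t :: real
  assumes norm: "is_cnorm N"
    and real_parts: "Re ` eigenvalues A = r ` {1..q}"
    and r_decr: "\<forall>i\<in>{1..q}. \<forall>j\<in>{1..q}. i < j \<longrightarrow> r j < r i"
    and classes: "\<forall>j\<in>{1..q}. eig_class A (r j) (lam j)"
    and eigvecs: "\<forall>j\<in>{1..q}.
         w j \<noteq> 0 \<and> w j v* cmat A = lam j *s w j \<and>
         v j \<noteq> 0 \<and> cmat A *v v j = lam j *s v j \<and>
         (\<Sum>i\<in>UNIV. w j $ i * v j $ i) = 1 \<and>
         (Im (lam j) = 0 \<longrightarrow> is_real_vec (w j) \<and> is_real_vec (v j))"
    and y0: "rowapp (w 1) y0 \<noteq> 0"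
    and z0_unit: "rnorm N z0 = 1"
    and z0: "rowapp (w 1) z0 \<noteq> 0"
    and small: "eps_u N q r lam w v t ((1 / rnorm N y0) *\<^sub>R y0) < 1"
  shows "approx_prec (Kz N A t ((1 / rnorm N y0) *\<^sub>R y0) z0)
                     (Kinf_z N lam w v t ((1 / rnorm N y0) *\<^sub>R y0) z0)
                     ((eps_u N q r lam w v t z0 + eps_u N q r lam w v t ((1 / rnorm N y0) *\<^sub>R y0))
                        / (1 - eps_u N q r lam w v t ((1 / rnorm N y0) *\<^sub>R y0)))
       \<and> approx_prec (Km N A t ((1 / rnorm N y0) *\<^sub>R y0))
                     (Kinf_m N lam w v t ((1 / rnorm N y0) *\<^sub>R y0))
                     ((eps_m N q r lam w v t + eps_u N q r lam w v t ((1 / rnorm N y0) *\<^sub>R y0))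
                        / (1 - eps_u N q r lam w v t ((1 / rnorm N y0) *\<^sub>R y0)))"
proof -
  interpret spectral_data N A q r lam w v
    using assms by unfold_locales
  define yh where "yh = (1 / rnorm N y0) *\<^sub>R y0"
  have "y0 \<noteq> 0" using y0 by (auto simp: rowapp_def)
  then have yh: "rowapp (w 1) yh \<noteq> 0"
    using y0 rnorm_pos[of y0] by (simp add: yh_def rowapp_scaleR)
  have approx_yh: "approx_prec (rnorm N (mexp t A *v yh)) (rnorm N (component t 1 *v yh))
      (eps_u N q r lam w v t yh)"
    by (rule approx_prec_rnorm_mexp_mult[OF yh])
  have small_yh: "eps_u N q r lam w v t yh < 1" using small by (simp add: yh_def)
  have pos: "0 < rnorm N (component t 1 *v yh)"
    by (rule rnorm_pos[OF component_mult_neq_0[OF one_in_range yh]])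
  have "approx_prec (Kz N A t yh z0) (Kinf_z N lam w v t yh z0)
      ((eps_u N q r lam w v t z0 + eps_u N q r lam w v t yh) / (1 - eps_u N q r lam w v t yh))"
    unfolding Kz_def Kinf_z_eq
    using approx_prec_rnorm_mexp_mult[OF z0] approx_yh small_yh pos by (rule approx_prec_divide)
  moreover have "approx_prec (Km N A t yh) (Kinf_m N lam w v t yh)
      ((eps_m N q r lam w v t + eps_u N q r lam w v t yh) / (1 - eps_u N q r lam w v t yh))"
    unfolding Km_def Kinf_m_eq
    using approx_prec_mat_opnorm_mexp[OF yh] approx_yh small_yh pos by (rule approx_prec_divide)
  ultimately show ?thesis unfolding yh_def by blast
qed

end
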